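(* Let $(\boldsymbol X(t))_{t\in\mathbb Z}$ be a $d$-variate weakly stationary process with $\mathbb E\boldsymbol X(t)=0$, let $a,b\in\{1,\ldots,d\}$, and assume $\sum_{u=-\infty}^\infty|u||\gamma_{jj}(u)|<\infty$ for $j=a,b$. Let $n\in\mathbb N$ and $k\in\{0,\ldots,n-1\}$. Then $$d_{\mathrm W}\Big(\mathcal L\big(n^{1/2}(\tilde\gamma_{ab}(k)-\gamma_{ab}(k))\big),\mathcal L\big(n^{1/2}(\hat\gamma_{ab}(k)-\gamma_{ab}(k))\big)\Big)\le n^{-1/2}\Big(\sum_{u=-\infty}^\infty|\gamma_{aa}(u)|\Big)^{1/2}\Big(\sum_{u=-\infty}^\infty|\gamma_{bb}(u)|\Big)^{1/2}$$ $$+\frac{|k|}{n^{3/2}}\Big(\sum_{u=-\infty}^\infty|\gamma_{aa}(u)|+\frac1n\sum_{u=-\infty}^\infty|u||\gamma_{aa}(u)|\Big)^{1/2}\Big(\sum_{u=-\infty}^\infty|\gamma_{bb}(u)|+\frac1n\sum_{u=-\infty}^\infty|u||\gamma_{bb}(u)|\Big)^{1/2}.$$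
   Context: $\gamma_{ab}(k):=\mathbb E[X_a(t+k)X_b(t)]$. With $\bar X_j:=\frac1n\sum_{t=1}^nX_j(t)$, $\tilde\gamma_{ab}(k):=\frac1n\sum_{t=1}^{n-k}(X_a(t+k)-\bar X_a)(X_b(t)-\bar X_b)$ and $\hat\gamma_{ab}(k):=\frac1n\sum_{t=1}^{n-k}X_a(t+k)X_b(t)$. $d_{\mathrm W}(\mathcal L(U),\mathcal L(V)):=\sup_h|\mathbb Eh(U)-\mathbb Eh(V)|$ over all 1-Lipschitz $h:\mathbb R\to\mathbb R$. *)

theory Defs
  imports "HOL-Probability.Probability"
begin

definition weakly_stationary :: "'s measure \<Rightarrow> nat \<Rightarrow> (int \<Rightarrow> nat \<Rightarrow> 's \<Rightarrow> real) \<Rightarrow> bool" where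
  "weakly_stationary M d X \<longleftrightarrow>
     (\<forall>t. \<forall>j\<in>{1..d}. X t j \<in> borel_measurable M \<and> integrable M (\<lambda>\<omega>. (X t j \<omega>)\<^sup>2)) \<and>
     (\<forall>s t. \<forall>j\<in>{1..d}. integral\<^sup>L M (X s j) = integral\<^sup>L M (X t j)) \<and>
     (\<forall>s t k. \<forall>i\<in>{1..d}. \<forall>j\<in>{1..d}.
        integral\<^sup>L M (\<lambda>\<omega>. X (t + k) i \<omega> * X t j \<omega>) = integral\<^sup>L M (\<lambda>\<omega>. X (s + k) i \<omega> * X s j \<omega>))"

definition acov :: "'s measure \<Rightarrow> (int \<Rightarrow> nat \<Rightarrow> 's \<Rightarrow> real) \<Rightarrow> nat \<Rightarrow> nat \<Rightarrow> int \<Rightarrow> real" where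
  "acov M X a b k = integral\<^sup>L M (\<lambda>\<omega>. X k a \<omega> * X 0 b \<omega>)"

definition sample_mean :: "(int \<Rightarrow> nat \<Rightarrow> 's \<Rightarrow> real) \<Rightarrow> nat \<Rightarrow> nat \<Rightarrow> 's \<Rightarrow> real" where
  "sample_mean X n j \<omega> = (1 / real n) * (\<Sum>t=1..n. X (int t) j \<omega>)"

definition acov_tilde :: "(int \<Rightarrow> nat \<Rightarrow> 's \<Rightarrow> real) \<Rightarrow> nat \<Rightarrow> nat \<Rightarrow> nat \<Rightarrow> nat \<Rightarrow> 's \<Rightarrow> real" where
  "acov_tilde X n a b k \<omega> = (1 / real n) *
     (\<Sum>t=1..n-k. (X (int t + int k) a \<omega> - sample_mean X n a \<omega>) * (X (int t) b \<omega> - sample_mean X n b \<omega>))"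

definition acov_hat :: "(int \<Rightarrow> nat \<Rightarrow> 's \<Rightarrow> real) \<Rightarrow> nat \<Rightarrow> nat \<Rightarrow> nat \<Rightarrow> nat \<Rightarrow> 's \<Rightarrow> real" where
  "acov_hat X n a b k \<omega> = (1 / real n) * (\<Sum>t=1..n-k. X (int t + int k) a \<omega> * X (int t) b \<omega>)"

definition wasserstein :: "real measure \<Rightarrow> real measure \<Rightarrow> ereal" where
  "wasserstein \<mu> \<nu> = (SUP h\<in>{h :: real \<Rightarrow> real. 1-lipschitz_on UNIV h}.
       ereal \<bar>integral\<^sup>L \<mu> h - integral\<^sup>L \<nu> h\<bar>)"

end

theory Submission
  imports Defs
begin

(* Evaluate both estimators on the same sample path: for 1-Lipschitz h the difference of
   expectations is at most E|U - V| = sqrt n * E|gamma~ - gamma^|.  Writing out the sample means,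
   n^3 (gamma~ - gamma^) = n^2/(n+k) * A * B - (n+k) * P * Q, where A = X_a(1) + ... + X_a(k) and
   B = X_b(n-k+1) + ... + X_b(n) are the boundary sums cut off by the lag, and P, Q are the full
   sums over 1..n with these boundary terms damped by the factor k/(n+k), the one that makes the
   cross terms cancel.  By Cauchy-Schwarz and stationarity, a product of two sums with weights
   bounded by 1 has E|.| at most the square roots of (total weight) * sum_u |gamma_jj(u)|.  The damped
   weights have total n^2/(n+k) and the boundary weights total k, so
   E|gamma~ - gamma^| <= (1 + k/(n+k)) / n * (sum_u |gamma_aa(u)|)^(1/2) (sum_u |gamma_bb(u)|)^(1/2). *)

definition square_integrable :: "'a measure \<Rightarrow> ('a \<Rightarrow> real) \<Rightarrow> bool" where
  "square_integrable M f \<longleftrightarrow> f \<in> borel_measurable M \<and> integrable M (\<lambda>x. (f x)\<^sup>2)"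

lemma abs_mult_le_sum_squares: "\<bar>x * y\<bar> \<le> x\<^sup>2 + (y::real)\<^sup>2"
proof -
  have "2 * (\<bar>x\<bar> * \<bar>y\<bar>) \<le> x\<^sup>2 + y\<^sup>2"
    using sum_squares_bound[of "\<bar>x\<bar>" "\<bar>y\<bar>"] by (simp add: mult.assoc)
  then show ?thesis
    unfolding abs_mult using mult_nonneg_nonneg[OF abs_ge_zero abs_ge_zero, of x y] by linarith
qed

lemma square_integrable_mult_integrable:
  assumes "square_integrable M f" "square_integrable M g"
  shows "integrable M (\<lambda>x. f x * g x)"
proof (rule Bochner_Integration.integrable_bound)
  show "integrable M (\<lambda>x. (f x)\<^sup>2 + (g x)\<^sup>2)" "(\<lambda>x. f x * g x) \<in> borel_measurable M"
    using assms by (auto simp: square_integrable_def)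
  show "AE x in M. norm (f x * g x) \<le> norm ((f x)\<^sup>2 + (g x)\<^sup>2)"
    using abs_mult_le_sum_squares by auto
qed

lemma square_integrable_add:
  assumes "square_integrable M f" "square_integrable M g"
  shows "square_integrable M (\<lambda>x. f x + g x)"
proof -
  have "integrable M (\<lambda>x. (f x)\<^sup>2 + (g x)\<^sup>2 + 2 * (f x * g x))"
    using assms square_integrable_mult_integrable[OF assms] by (auto simp: square_integrable_def)
  then show ?thesis
    using assms by (auto simp: square_integrable_def power2_sum mult.assoc)
qed

lemma square_integrable_cmult: "square_integrable M f \<Longrightarrow> square_integrable M (\<lambda>x. c * f x)"
  by (auto simp: square_integrable_def power_mult_distrib)

lemma square_integrable_diff:
  "square_integrable M f \<Longrightarrow> square_integrable M g \<Longrightarrow> square_integrable M (\<lambda>x. f x - g x)"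
  using square_integrable_add[of M f "\<lambda>x. -1 * g x"] square_integrable_cmult[of M g "-1"] by simp

lemma square_integrable_sum:
  "(\<And>i. i \<in> I \<Longrightarrow> square_integrable M (f i)) \<Longrightarrow> square_integrable M (\<lambda>x. \<Sum>i\<in>I. f i x)"
proof (induction I rule: infinite_finite_induct)
  case (insert i I)
  then show ?case using square_integrable_add[of M "f i" "\<lambda>x. \<Sum>i\<in>I. f i x"] by simp
qed (auto simp: square_integrable_def)

lemma integral_square_sum:
  assumes "\<And>s. s \<in> I \<Longrightarrow> square_integrable M (f s)"
  shows "(\<integral>x. (\<Sum>s\<in>I. f s x)\<^sup>2 \<partial>M) = (\<Sum>s\<in>I. \<Sum>t\<in>I. \<integral>x. f s x * f t x \<partial>M)"
  unfolding power2_eq_square sum_product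
  using assms by (simp add: square_integrable_mult_integrable Bochner_Integration.integral_sum)

lemma square_integrable_Cauchy_Schwarz:
  assumes "square_integrable M f" "square_integrable M g"
  shows "(\<integral>x. \<bar>f x * g x\<bar> \<partial>M) \<le> sqrt (\<integral>x. (f x)\<^sup>2 \<partial>M) * sqrt (\<integral>x. (g x)\<^sup>2 \<partial>M)"
proof -
  have [measurable]: "f \<in> borel_measurable M" "g \<in> borel_measurable M"
    using assms by (auto simp: square_integrable_def)
  have nn: "(\<integral>\<^sup>+x. ennreal (h x) \<partial>M) = ennreal (\<integral>x. h x \<partial>M)" if "integrable M h" "\<And>x. h x \<ge> 0" for h
    using that by (intro nn_integral_eq_integral) auto
  have "(\<integral>\<^sup>+x. ennreal \<bar>f x\<bar> * ennreal \<bar>g x\<bar> \<partial>M) = ennreal (\<integral>x. \<bar>f x * g x\<bar> \<partial>M)"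
    using nn[of "\<lambda>x. \<bar>f x * g x\<bar>"] integrable_abs[OF square_integrable_mult_integrable[OF assms]]
    by (simp add: abs_mult ennreal_mult')
  then have "ennreal ((\<integral>x. \<bar>f x * g x\<bar> \<partial>M)\<^sup>2) = (\<integral>\<^sup>+x. ennreal \<bar>f x\<bar> * ennreal \<bar>g x\<bar> \<partial>M)\<^sup>2"
    by (simp add: ennreal_power)
  also have "\<dots> \<le> (\<integral>\<^sup>+x. (ennreal \<bar>f x\<bar>)\<^sup>2 \<partial>M) * (\<integral>\<^sup>+x. (ennreal \<bar>g x\<bar>)\<^sup>2 \<partial>M)"
    by (rule Cauchy_Schwarz_nn_integral) auto
  also have "\<dots> = ennreal (\<integral>x. (f x)\<^sup>2 \<partial>M) * ennreal (\<integral>x. (g x)\<^sup>2 \<partial>M)"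
    using nn[of "\<lambda>x. (f x)\<^sup>2"] nn[of "\<lambda>x. (g x)\<^sup>2"] assms
    by (simp add: square_integrable_def ennreal_power)
  also have "\<dots> = ennreal ((\<integral>x. (f x)\<^sup>2 \<partial>M) * (\<integral>x. (g x)\<^sup>2 \<partial>M))"
    by (simp add: ennreal_mult)
  finally have "(\<integral>x. \<bar>f x * g x\<bar> \<partial>M)\<^sup>2 \<le> (\<integral>x. (f x)\<^sup>2 \<partial>M) * (\<integral>x. (g x)\<^sup>2 \<partial>M)"
    by simp
  then show ?thesis
    by (simp add: real_le_rsqrt flip: real_sqrt_mult)
qed

lemma integrable_lipschitz_comp:
  fixes f :: "'a \<Rightarrow> real" and h :: "real \<Rightarrow> real"
  assumes "finite_measure M" "C-lipschitz_on UNIV h" "integrable M f"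
  shows "integrable M (\<lambda>x. h (f x))"
proof (rule Bochner_Integration.integrable_bound)
  have "continuous_on UNIV h"
    using assms(2) by (rule lipschitz_on_continuous_on)
  then show "(\<lambda>x. h (f x)) \<in> borel_measurable M"
    using assms(3)
    by (intro measurable_compose[OF borel_measurable_integrable borel_measurable_continuous_onI])
  show "integrable M (\<lambda>x. \<bar>h 0\<bar> + C * \<bar>f x\<bar>)"
    using assms(1,3) by (simp add: finite_measure.integrable_const)
  have "\<bar>h y\<bar> \<le> \<bar>h 0\<bar> + C * \<bar>y\<bar>" for y
    using lipschitz_onD[OF assms(2), of y 0] by (simp add: dist_real_def)
  then show "AE x in M. norm (h (f x)) \<le> norm (\<bar>h 0\<bar> + C * \<bar>f x\<bar>)"
    by (auto intro: order_trans[OF _ abs_ge_self])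
qed

lemma wasserstein_distr_le_integral_abs_diff:
  assumes M: "finite_measure M" and U: "integrable M U" and V: "integrable M V"
  shows "wasserstein (distr M borel U) (distr M borel V) \<le> ereal (\<integral>x. \<bar>U x - V x\<bar> \<partial>M)"
  unfolding wasserstein_def
proof (intro SUP_least, clarsimp)
  fix h :: "real \<Rightarrow> real" assume h: "1-lipschitz_on UNIV h"
  have [measurable]: "h \<in> borel_measurable borel" "U \<in> borel_measurable M" "V \<in> borel_measurable M"
    using lipschitz_on_continuous_on[OF h] U V by (auto intro: borel_measurable_continuous_onI)
  have hU: "integrable M (\<lambda>x. h (U x))" and hV: "integrable M (\<lambda>x. h (V x))"
    using integrable_lipschitz_comp[OF M h] U V by auto
  have "\<bar>integral\<^sup>L (distr M borel U) h - integral\<^sup>L (distr M borel V) h\<bar>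
      = \<bar>\<integral>x. h (U x) - h (V x) \<partial>M\<bar>"
    using hU hV by (simp add: integral_distr)
  also have "\<dots> \<le> (\<integral>x. \<bar>h (U x) - h (V x)\<bar> \<partial>M)"
    by (rule integral_abs_bound)
  also have "\<dots> \<le> (\<integral>x. \<bar>U x - V x\<bar> \<partial>M)"
    using hU hV U V lipschitz_onD[OF h] by (intro integral_mono) (auto simp: dist_real_def)
  finally show "\<bar>integral\<^sup>L (distr M borel U) h - integral\<^sup>L (distr M borel V) h\<bar>
      \<le> (\<integral>x. \<bar>U x - V x\<bar> \<partial>M)" .
qed

lemma abs_summable_on_of_first_moment:
  fixes g :: "int \<Rightarrow> real"
  assumes "(\<lambda>u. \<bar>real_of_int u\<bar> * \<bar>g u\<bar>) summable_on UNIV"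
  shows "(\<lambda>u. \<bar>g u\<bar>) summable_on UNIV"
proof -
  have "(\<lambda>u. \<bar>real_of_int u\<bar> * \<bar>g u\<bar>) summable_on (UNIV - {0})"
    using assms by (rule summable_on_subset_banach) simp
  then have "(\<lambda>u. \<bar>g u\<bar>) summable_on (UNIV - {0})"
  proof (rule summable_on_comparison_test)
    fix u :: int assume "u \<in> UNIV - {0}"
    then have "1 \<le> \<bar>real_of_int u\<bar>" by auto
    then show "\<bar>g u\<bar> \<le> \<bar>real_of_int u\<bar> * \<bar>g u\<bar>"
      using mult_right_mono[of 1 _ "\<bar>g u\<bar>"] by simp
  qed simp
  then have "(\<lambda>u. \<bar>g u\<bar>) summable_on insert 0 (UNIV - {0})"
    by (simp only: summable_on_insert_iff)
  then show ?thesis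
    by (simp add: insert_absorb)
qed

lemma sum_abs_lag_le_infsum:
  fixes g :: "int \<Rightarrow> real"
  assumes "(\<lambda>u. \<bar>g u\<bar>) summable_on UNIV" "finite I"
  shows "(\<Sum>t\<in>I. \<bar>g (int s - int t)\<bar>) \<le> (\<Sum>\<^sub>\<infinity>u. \<bar>g u\<bar>)"
proof -
  have "inj_on (\<lambda>t. int s - int t) I" by (auto simp: inj_on_def)
  then have "(\<Sum>t\<in>I. \<bar>g (int s - int t)\<bar>) = (\<Sum>u\<in>(\<lambda>t. int s - int t) ` I. \<bar>g u\<bar>)"
    by (simp add: sum.reindex)
  also have "\<dots> \<le> (\<Sum>\<^sub>\<infinity>u. \<bar>g u\<bar>)"
    using assms by (intro finite_sum_le_infsum) auto
  finally show ?thesis .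
qed

lemma weakly_stationary_square_integrable:
  "weakly_stationary M d X \<Longrightarrow> j \<in> {1..d} \<Longrightarrow> square_integrable M (X t j)"
  by (simp add: weakly_stationary_def square_integrable_def)

lemma weakly_stationary_integral_mult:
  assumes "weakly_stationary M d X" "i \<in> {1..d}" "j \<in> {1..d}"
  shows "(\<integral>\<omega>. X s i \<omega> * X t j \<omega> \<partial>M) = acov M X i j (s - t)"
proof -
  have "(\<integral>\<omega>. X (t + (s - t)) i \<omega> * X t j \<omega> \<partial>M) = (\<integral>\<omega>. X (0 + (s - t)) i \<omega> * X 0 j \<omega> \<partial>M)"
    using assms unfolding weakly_stationary_def by blast
  then show ?thesis by (simp add: acov_def)
qed

lemma square_integrable_weighted_sum:
  "weakly_stationary M d X \<Longrightarrow> j \<in> {1..d} \<Longrightarrow> square_integrable M (\<lambda>\<omega>. \<Sum>s\<in>I. w s * X (int s) j \<omega>)"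
  by (intro square_integrable_sum square_integrable_cmult weakly_stationary_square_integrable)

lemma weighted_sum_second_moment_le:
  assumes ws: "weakly_stationary M d X" and j: "j \<in> {1..d}"
    and sm: "(\<lambda>u. \<bar>acov M X j j u\<bar>) summable_on UNIV"
    and I: "finite I" and w: "\<And>s. s \<in> I \<Longrightarrow> \<bar>w s\<bar> \<le> 1"
  shows "(\<integral>\<omega>. (\<Sum>s\<in>I. w s * X (int s) j \<omega>)\<^sup>2 \<partial>M)
           \<le> (\<Sum>s\<in>I. \<bar>w s\<bar>) * (\<Sum>\<^sub>\<infinity>u. \<bar>acov M X j j u\<bar>)"
proof -
  let ?g = "acov M X j j"
  have sq: "square_integrable M (\<lambda>\<omega>. w s * X (int s) j \<omega>)" for s
    by (intro square_integrable_cmult weakly_stationary_square_integrable[OF ws j])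
  have "(\<integral>\<omega>. (\<Sum>s\<in>I. w s * X (int s) j \<omega>)\<^sup>2 \<partial>M) = (\<Sum>s\<in>I. \<Sum>t\<in>I. w s * w t * ?g (int s - int t))"
    using weakly_stationary_integral_mult[OF ws j j]
    by (simp add: integral_square_sum[OF sq] mult_ac)
  also have "\<dots> \<le> (\<Sum>s\<in>I. \<Sum>t\<in>I. \<bar>w s\<bar> * \<bar>?g (int s - int t)\<bar>)"
  proof (intro sum_mono)
    fix s t assume "s \<in> I" "t \<in> I"
    have "\<bar>w s * w t * ?g (int s - int t)\<bar> = \<bar>w s\<bar> * \<bar>?g (int s - int t)\<bar> * \<bar>w t\<bar>"
      by (simp add: abs_mult mult_ac)
    also have "\<dots> \<le> \<bar>w s\<bar> * \<bar>?g (int s - int t)\<bar>"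
      using w \<open>t \<in> I\<close> by (intro mult_left_le) auto
    finally show "w s * w t * ?g (int s - int t) \<le> \<bar>w s\<bar> * \<bar>?g (int s - int t)\<bar>"
      by linarith
  qed
  also have "\<dots> \<le> (\<Sum>s\<in>I. \<bar>w s\<bar> * (\<Sum>\<^sub>\<infinity>u. \<bar>?g u\<bar>))"
    unfolding sum_distrib_left[symmetric]
    by (intro sum_mono mult_left_mono sum_abs_lag_le_infsum sm I) simp
  finally show ?thesis
    by (simp add: sum_distrib_right)
qed

lemma weighted_sums_integral_abs_mult_le:
  assumes ws: "weakly_stationary M d X" and i: "i \<in> {1..d}" and j: "j \<in> {1..d}"
    and smi: "(\<lambda>u. \<bar>acov M X i i u\<bar>) summable_on UNIV"
    and smj: "(\<lambda>u. \<bar>acov M X j j u\<bar>) summable_on UNIV"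
    and I: "finite I" "\<And>s. s \<in> I \<Longrightarrow> \<bar>w s\<bar> \<le> 1"
    and J: "finite J" "\<And>s. s \<in> J \<Longrightarrow> \<bar>v s\<bar> \<le> 1"
  shows "(\<integral>\<omega>. \<bar>(\<Sum>s\<in>I. w s * X (int s) i \<omega>) * (\<Sum>s\<in>J. v s * X (int s) j \<omega>)\<bar> \<partial>M)
    \<le> sqrt ((\<Sum>s\<in>I. \<bar>w s\<bar>) * (\<Sum>\<^sub>\<infinity>u. \<bar>acov M X i i u\<bar>))
       * sqrt ((\<Sum>s\<in>J. \<bar>v s\<bar>) * (\<Sum>\<^sub>\<infinity>u. \<bar>acov M X j j u\<bar>))"
proof (rule order_trans[OF square_integrable_Cauchy_Schwarz])
  show "square_integrable M (\<lambda>\<omega>. \<Sum>s\<in>I. w s * X (int s) i \<omega>)"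
    "square_integrable M (\<lambda>\<omega>. \<Sum>s\<in>J. v s * X (int s) j \<omega>)"
    using square_integrable_weighted_sum[OF ws i] square_integrable_weighted_sum[OF ws j] by auto
next
  show "sqrt (\<integral>\<omega>. (\<Sum>s\<in>I. w s * X (int s) i \<omega>)\<^sup>2 \<partial>M) * sqrt (\<integral>\<omega>. (\<Sum>s\<in>J. v s * X (int s) j \<omega>)\<^sup>2 \<partial>M)
    \<le> sqrt ((\<Sum>s\<in>I. \<bar>w s\<bar>) * (\<Sum>\<^sub>\<infinity>u. \<bar>acov M X i i u\<bar>))
       * sqrt ((\<Sum>s\<in>J. \<bar>v s\<bar>) * (\<Sum>\<^sub>\<infinity>u. \<bar>acov M X j j u\<bar>))"
    by (intro mult_mono real_sqrt_le_mono weighted_sum_second_moment_le[OF ws i smi I]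
        weighted_sum_second_moment_le[OF ws j smj J])
      (auto intro!: mult_nonneg_nonneg sum_nonneg infsum_nonneg)
qed

lemma sum_lag_shift:
  fixes k n :: nat
  assumes "k \<le> n"
  shows "(\<Sum>t=1..n-k. f (t + k)) = (\<Sum>t=1..n. f t) - (\<Sum>t=1..k. f t :: 'a :: ab_group_add)"
proof -
  have "(\<Sum>t=1..n. f t) = (\<Sum>t=1..k. f t) + (\<Sum>t=k+1..k+(n-k). f t)"
    using sum.ub_add_nat[of 1 k f "n - k"] assms by simp
  also have "(\<Sum>t=k+1..k+(n-k). f t) = (\<Sum>t=1..n-k. f (t + k))"
    using sum.shift_bounds_cl_nat_ivl[of f 1 k "n - k"] by (simp add: add.commute)
  finally show ?thesis by simp
qed

lemma sum_lag_head:
  fixes k n :: nat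
  assumes "k \<le> n"
  shows "(\<Sum>t=1..n-k. g t) = (\<Sum>t=1..n. g t) - (\<Sum>t=n-k+1..n. g t :: 'a :: ab_group_add)"
  using sum.ub_add_nat[of 1 "n - k" g k] assms by simp

lemma sum_damped:
  fixes f :: "'a \<Rightarrow> 'b :: comm_ring_1"
  assumes "finite I" "J \<subseteq> I"
  shows "(\<Sum>s\<in>I. (if s \<in> J then c else 1) * f s) = (\<Sum>s\<in>I. f s) - (1 - c) * (\<Sum>s\<in>J. f s)"
proof -
  have "(\<Sum>s\<in>I. (if s \<in> J then c else 1) * f s) = (\<Sum>s\<in>I. f s - (if s \<in> J then (1 - c) * f s else 0))"
    by (intro sum.cong) (auto simp: algebra_simps)
  also have "\<dots> = (\<Sum>s\<in>I. f s) - (1 - c) * (\<Sum>s\<in>J. f s)"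
    using assms by (simp add: sum_subtractf Int_absorb1 Int_absorb2 flip: sum.inter_restrict sum_distrib_left)
  finally show ?thesis .
qed

lemma sum_damped_weights:
  assumes "J \<subseteq> {1..n}" "card J = k"
  shows "(\<Sum>s\<in>{1..n}. \<bar>if s \<in> J then real k / real (n + k) else 1\<bar>) = (real n)\<^sup>2 / real (n + k)"
proof -
  have "(\<Sum>s\<in>{1..n}. \<bar>if s \<in> J then real k / real (n + k) else 1\<bar>)
      = (\<Sum>s\<in>{1..n}. (if s \<in> J then real k / real (n + k) else 1) * 1)"
    by (intro sum.cong) auto
  also have "\<dots> = real n - (1 - real k / real (n + k)) * real k"
    using sum_damped[of "{1..n}" J "real k / real (n + k)" "\<lambda>_. 1"] assms by simp
  also have "\<dots> = (real n)\<^sup>2 / real (n + k)"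
    using assms card_mono[OF _ assms(1)] by (cases "n = 0") (auto simp: field_simps power2_eq_square)
  finally show ?thesis .
qed

lemma sum_centred_lag_products:
  fixes f g :: "nat \<Rightarrow> real" and k n :: nat
  assumes "k < n"
  defines "F \<equiv> \<Sum>t=1..n. f t" and "G \<equiv> \<Sum>t=1..n. g t"
    and "A \<equiv> \<Sum>t=1..k. f t" and "B \<equiv> \<Sum>t=n-k+1..n. g t" and "r \<equiv> real n / real (n + k)"
  shows "(\<Sum>t=1..n-k. (f (t + k) - F / real n) * (g t - G / real n))
    = (\<Sum>t=1..n-k. f (t + k) * g t)
      - (real (n + k) * (F - r * A) * (G - r * B) - real n * r * A * B) / (real n)\<^sup>2"
proof -
  have "(\<Sum>t=1..n-k. (f (t + k) - F / real n) * (g t - G / real n))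
      = (\<Sum>t=1..n-k. f (t + k) * g t) - G / real n * (\<Sum>t=1..n-k. f (t + k))
        - F / real n * (\<Sum>t=1..n-k. g t) + real (n - k) * (F / real n) * (G / real n)"
    using assms(1) by (simp add: algebra_simps sum_subtractf sum.distrib sum_distrib_left sum_distrib_right)
      (simp add: field_simps)
  also have "\<dots> = (\<Sum>t=1..n-k. f (t + k) * g t) - G / real n * (F - A) - F / real n * (G - B)
      + real (n - k) * (F / real n) * (G / real n)"
    unfolding sum_lag_shift[OF less_imp_le[OF assms(1)]] sum_lag_head[OF less_imp_le[OF assms(1)]]
      F_def G_def A_def B_def ..
  also have "\<dots> = (\<Sum>t=1..n-k. f (t + k) * g t)
      - (real (n + k) * F * G - real n * (F * B + A * G)) / (real n)\<^sup>2"
    using assms(1) by (simp add: field_simps power2_eq_square)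
  also have "real (n + k) * F * G - real n * (F * B + A * G)
      = real (n + k) * (F - r * A) * (G - r * B) - real n * r * A * B"
  proof -
    have n_eq: "real n = real (n + k) * r"
      using assms(1) by (simp add: r_def)
    show ?thesis unfolding n_eq by (simp add: algebra_simps)
  qed
  finally show ?thesis .
qed

lemma acov_tilde_minus_acov_hat:
  fixes X :: "int \<Rightarrow> nat \<Rightarrow> 's \<Rightarrow> real"
  assumes "k < n"
  shows "acov_tilde X n a b k \<omega> - acov_hat X n a b k \<omega>
    = ((real n)\<^sup>2 / real (n + k) * (\<Sum>s=1..k. X (int s) a \<omega>) * (\<Sum>s=n-k+1..n. X (int s) b \<omega>)
       - real (n + k) * (\<Sum>s=1..n. (if s \<in> {1..k} then real k / real (n + k) else 1) * X (int s) a \<omega>)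
                      * (\<Sum>s=1..n. (if s \<in> {n-k+1..n} then real k / real (n + k) else 1) * X (int s) b \<omega>))
      / (real n)^3" (is "_ = ?rhs")
proof -
  let ?f = "\<lambda>s. X (int s) a \<omega>" and ?g = "\<lambda>s. X (int s) b \<omega>"
  define r where "r = real n / real (n + k)"
  have one_minus: "1 - real k / real (n + k) = r"
    using assms by (simp add: r_def field_simps)
  have "acov_tilde X n a b k \<omega> - acov_hat X n a b k \<omega>
      = ((\<Sum>t=1..n-k. (?f (t + k) - (\<Sum>t=1..n. ?f t) / real n) * (?g t - (\<Sum>t=1..n. ?g t) / real n))
         - (\<Sum>t=1..n-k. ?f (t + k) * ?g t)) / real n"
    by (simp add: acov_tilde_def acov_hat_def sample_mean_def diff_divide_distrib)
  also have "\<dots> = (real n * r * (\<Sum>s=1..k. ?f s) * (\<Sum>s=n-k+1..n. ?g s)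
       - real (n + k) * ((\<Sum>s=1..n. ?f s) - r * (\<Sum>s=1..k. ?f s))
                      * ((\<Sum>s=1..n. ?g s) - r * (\<Sum>s=n-k+1..n. ?g s))) / (real n)^3"
    unfolding sum_centred_lag_products[OF assms, of ?f ?g, folded r_def]
    using assms by (simp add: field_simps power2_eq_square power3_eq_cube)
  also have "\<dots> = ?rhs"
  proof -
    have "{1..k} \<subseteq> {1..n}" "{n-k+1..n} \<subseteq> {1..n}"
      using assms by auto
    then show ?thesis
      using sum_damped[of "{1..n}" "{1..k}" "real k / real (n + k)" ?f]
        sum_damped[of "{1..n}" "{n-k+1..n}" "real k / real (n + k)" ?g]
      unfolding one_minus by (simp add: r_def power2_eq_square)
  qed
  finally show ?thesis .
qed

lemma sqrt_scaled_mult: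
  "0 \<le> c \<Longrightarrow> sqrt (c * x) * sqrt (c * y) = c * (sqrt x * sqrt y)"
  by (simp add: real_sqrt_mult)

lemma integral_abs_damped_sums_mult_le:
  assumes ws: "weakly_stationary M d X" and a: "a \<in> {1..d}" and b: "b \<in> {1..d}"
    and sma: "(\<lambda>u. \<bar>acov M X a a u\<bar>) summable_on UNIV"
    and smb: "(\<lambda>u. \<bar>acov M X b b u\<bar>) summable_on UNIV"
    and kn: "k \<le> n"
  shows "(\<integral>\<omega>. \<bar>(\<Sum>s=1..n. (if s \<in> {1..k} then real k / real (n + k) else 1) * X (int s) a \<omega>)
             * (\<Sum>s=1..n. (if s \<in> {n-k+1..n} then real k / real (n + k) else 1) * X (int s) b \<omega>)\<bar> \<partial>M)
    \<le> (real n)\<^sup>2 / real (n + k) * (sqrt (\<Sum>\<^sub>\<infinity>u. \<bar>acov M X a a u\<bar>) * sqrt (\<Sum>\<^sub>\<infinity>u. \<bar>acov M X b b u\<bar>))"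
    (is "?lhs \<le> _")
proof -
  have "?lhs \<le> sqrt ((real n)\<^sup>2 / real (n + k) * (\<Sum>\<^sub>\<infinity>u. \<bar>acov M X a a u\<bar>))
      * sqrt ((real n)\<^sup>2 / real (n + k) * (\<Sum>\<^sub>\<infinity>u. \<bar>acov M X b b u\<bar>))"
    using weighted_sums_integral_abs_mult_le[OF ws a b sma smb,
        of "{1..n}" "\<lambda>s. if s \<in> {1..k} then real k / real (n + k) else 1"
        "{1..n}" "\<lambda>s. if s \<in> {n-k+1..n} then real k / real (n + k) else 1"]
      sum_damped_weights[of "{1..k}" n k] sum_damped_weights[of "{n-k+1..n}" n k] kn
    by auto
  also have "\<dots> = (real n)\<^sup>2 / real (n + k) * (sqrt (\<Sum>\<^sub>\<infinity>u. \<bar>acov M X a a u\<bar>) * sqrt (\<Sum>\<^sub>\<infinity>u. \<bar>acov M X b b u\<bar>))"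
    by (rule sqrt_scaled_mult) simp
  finally show ?thesis .
qed

lemma integral_abs_boundary_sums_mult_le:
  assumes ws: "weakly_stationary M d X" and a: "a \<in> {1..d}" and b: "b \<in> {1..d}"
    and sma: "(\<lambda>u. \<bar>acov M X a a u\<bar>) summable_on UNIV"
    and smb: "(\<lambda>u. \<bar>acov M X b b u\<bar>) summable_on UNIV"
    and kn: "k \<le> n"
  shows "(\<integral>\<omega>. \<bar>(\<Sum>s=1..k. X (int s) a \<omega>) * (\<Sum>s=n-k+1..n. X (int s) b \<omega>)\<bar> \<partial>M)
    \<le> real k * (sqrt (\<Sum>\<^sub>\<infinity>u. \<bar>acov M X a a u\<bar>) * sqrt (\<Sum>\<^sub>\<infinity>u. \<bar>acov M X b b u\<bar>))"
    (is "?lhs \<le> _")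
proof -
  have "?lhs \<le> sqrt (real k * (\<Sum>\<^sub>\<infinity>u. \<bar>acov M X a a u\<bar>)) * sqrt (real k * (\<Sum>\<^sub>\<infinity>u. \<bar>acov M X b b u\<bar>))"
    using weighted_sums_integral_abs_mult_le[OF ws a b sma smb,
        of "{1..k}" "\<lambda>_. 1" "{n-k+1..n}" "\<lambda>_. 1"] kn
    by simp
  also have "\<dots> = real k * (sqrt (\<Sum>\<^sub>\<infinity>u. \<bar>acov M X a a u\<bar>) * sqrt (\<Sum>\<^sub>\<infinity>u. \<bar>acov M X b b u\<bar>))"
    by (rule sqrt_scaled_mult) simp
  finally show ?thesis .
qed

lemma integral_abs_diff_products_le:
  assumes "square_integrable M A" "square_integrable M B" "square_integrable M P" "square_integrable M Q"
    and "0 \<le> \<alpha>" "0 \<le> \<beta>"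
  shows "(\<integral>x. \<bar>\<alpha> * (A x * B x) - \<beta> * (P x * Q x)\<bar> \<partial>M)
    \<le> \<alpha> * (\<integral>x. \<bar>A x * B x\<bar> \<partial>M) + \<beta> * (\<integral>x. \<bar>P x * Q x\<bar> \<partial>M)"
proof -
  have "integrable M (\<lambda>x. \<bar>A x * B x\<bar>)" "integrable M (\<lambda>x. \<bar>P x * Q x\<bar>)"
    using assms by (auto intro!: square_integrable_mult_integrable)
  then have "(\<integral>x. \<bar>\<alpha> * (A x * B x) - \<beta> * (P x * Q x)\<bar> \<partial>M) \<le> (\<integral>x. \<alpha> * \<bar>A x * B x\<bar> + \<beta> * \<bar>P x * Q x\<bar> \<partial>M)"
    using assms(5,6)
    by (intro integral_mono') (auto simp: abs_mult intro: order_trans[OF abs_triangle_ineq4])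
  then show ?thesis
    using \<open>integrable M (\<lambda>x. \<bar>A x * B x\<bar>)\<close> \<open>integrable M (\<lambda>x. \<bar>P x * Q x\<bar>)\<close> by simp
qed

lemma integral_abs_acov_tilde_minus_acov_hat_le:
  assumes ws: "weakly_stationary M d X" and a: "a \<in> {1..d}" and b: "b \<in> {1..d}"
    and sma: "(\<lambda>u. \<bar>acov M X a a u\<bar>) summable_on UNIV"
    and smb: "(\<lambda>u. \<bar>acov M X b b u\<bar>) summable_on UNIV"
    and kn: "k < n"
  shows "(\<integral>\<omega>. \<bar>acov_tilde X n a b k \<omega> - acov_hat X n a b k \<omega>\<bar> \<partial>M)
    \<le> (1 + real k / real (n + k)) / real n * sqrt (\<Sum>\<^sub>\<infinity>u. \<bar>acov M X a a u\<bar>) * sqrt (\<Sum>\<^sub>\<infinity>u. \<bar>acov M X b b u\<bar>)"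
proof -
  define P where "P \<omega> = (\<Sum>s=1..n. (if s \<in> {1..k} then real k / real (n + k) else 1) * X (int s) a \<omega>)" for \<omega>
  define Q where "Q \<omega> = (\<Sum>s=1..n. (if s \<in> {n-k+1..n} then real k / real (n + k) else 1) * X (int s) b \<omega>)" for \<omega>
  define A where "A \<omega> = (\<Sum>s=1..k. X (int s) a \<omega>)" for \<omega>
  define B where "B \<omega> = (\<Sum>s=n-k+1..n. X (int s) b \<omega>)" for \<omega>
  define S where "S = sqrt (\<Sum>\<^sub>\<infinity>u. \<bar>acov M X a a u\<bar>) * sqrt (\<Sum>\<^sub>\<infinity>u. \<bar>acov M X b b u\<bar>)"
  have sq: "square_integrable M A" "square_integrable M B" "square_integrable M P" "square_integrable M Q"
    using square_integrable_weighted_sum[OF ws a] square_integrable_weighted_sum[OF ws b]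
      square_integrable_weighted_sum[OF ws a, where w="\<lambda>_. 1"]
      square_integrable_weighted_sum[OF ws b, where w="\<lambda>_. 1"]
    unfolding P_def Q_def A_def B_def by auto
  have "(\<integral>\<omega>. \<bar>acov_tilde X n a b k \<omega> - acov_hat X n a b k \<omega>\<bar> \<partial>M)
      = (\<integral>\<omega>. \<bar>(real n)\<^sup>2 / real (n + k) * (A \<omega> * B \<omega>) - real (n + k) * (P \<omega> * Q \<omega>)\<bar> \<partial>M) / (real n)^3"
    unfolding acov_tilde_minus_acov_hat[OF kn] P_def Q_def A_def B_def by (simp add: mult_ac)
  also have "\<dots> \<le> ((real n)\<^sup>2 / real (n + k) * (\<integral>\<omega>. \<bar>A \<omega> * B \<omega>\<bar> \<partial>M)
      + real (n + k) * (\<integral>\<omega>. \<bar>P \<omega> * Q \<omega>\<bar> \<partial>M)) / (real n)^3"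
    by (intro divide_right_mono integral_abs_diff_products_le sq) auto
  also have "\<dots> \<le> ((real n)\<^sup>2 / real (n + k) * (real k * S)
      + real (n + k) * ((real n)\<^sup>2 / real (n + k) * S)) / (real n)^3"
    using integral_abs_boundary_sums_mult_le[OF ws a b sma smb]
      integral_abs_damped_sums_mult_le[OF ws a b sma smb] kn
    unfolding A_def B_def P_def Q_def S_def by (intro divide_right_mono add_mono mult_left_mono) auto
  also have "\<dots> = (1 + real k / real (n + k)) / real n * S"
  proof -
    have "real (n + k) > 0" "real n > 0"
      using kn by auto
    then show ?thesis
      by (simp add: field_simps power2_eq_square power3_eq_cube del: of_nat_add)
  qed
  finally show ?thesis
    unfolding S_def by (simp add: mult.assoc)
qed

lemma square_integrable_sample_mean:
  "weakly_stationary M d X \<Longrightarrow> j \<in> {1..d} \<Longrightarrow> square_integrable M (sample_mean X n j)"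
  unfolding sample_mean_def[abs_def]
  by (intro square_integrable_cmult square_integrable_sum weakly_stationary_square_integrable)

lemma integrable_acov_hat:
  assumes "weakly_stationary M d X" "a \<in> {1..d}" "b \<in> {1..d}"
  shows "integrable M (acov_hat X n a b k)"
  unfolding acov_hat_def[abs_def]
  using assms by (intro integrable_mult_right Bochner_Integration.integrable_sum
      square_integrable_mult_integrable weakly_stationary_square_integrable)

lemma integrable_acov_tilde:
  assumes "weakly_stationary M d X" "a \<in> {1..d}" "b \<in> {1..d}"
  shows "integrable M (acov_tilde X n a b k)"
  unfolding acov_tilde_def[abs_def]
  using assms by (intro integrable_mult_right Bochner_Integration.integrable_sum square_integrable_mult_integrable
      square_integrable_diff square_integrable_sample_mean weakly_stationary_square_integrable)

lemma lag_coefficient_le: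
  fixes k n :: nat
  assumes "k < n"
  shows "sqrt (real n) * ((1 + real k / real (n + k)) / real n)
    \<le> 1 / sqrt (real n) + real k / real n powr (3/2)"
proof -
  have n: "real n > 0" using assms by simp
  have split: "sqrt (real n) * ((1 + x) / real n) = 1 / sqrt (real n) + x / sqrt (real n)" for x
    using n by (simp add: field_simps)
  have "sqrt (real n) * ((1 + real k / real (n + k)) / real n)
      = 1 / sqrt (real n) + real k / real (n + k) / sqrt (real n)"
    by (rule split)
  also have "\<dots> \<le> 1 / sqrt (real n) + real k / real n / sqrt (real n)"
    using n by (intro add_left_mono divide_right_mono divide_left_mono) auto
  also have "real k / real n / sqrt (real n) = real k / real n powr (3/2)"
    using n by (simp add: powr_add[of _ 1 "1/2", simplified] powr_half_sqrt)
  finally show ?thesis .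
qed

lemma rescaled_difference_bound_le:
  fixes k n :: nat and Sa Sb Ta Tb :: real
  assumes "k < n" "0 \<le> Sa" "0 \<le> Sb" "0 \<le> Ta" "0 \<le> Tb"
  shows "sqrt (real n) * ((1 + real k / real (n + k)) / real n * sqrt Sa * sqrt Sb)
    \<le> 1 / sqrt (real n) * sqrt Sa * sqrt Sb
      + real k / real n powr (3/2) * sqrt (Sa + 1 / real n * Ta) * sqrt (Sb + 1 / real n * Tb)"
proof -
  have "sqrt (real n) * ((1 + real k / real (n + k)) / real n * sqrt Sa * sqrt Sb)
      = sqrt (real n) * ((1 + real k / real (n + k)) / real n) * (sqrt Sa * sqrt Sb)"
    by (simp only: mult_ac)
  also have "\<dots> \<le> (1 / sqrt (real n) + real k / real n powr (3/2)) * (sqrt Sa * sqrt Sb)"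
    using lag_coefficient_le[OF assms(1)] assms by (intro mult_right_mono) auto
  also have "\<dots> \<le> 1 / sqrt (real n) * sqrt Sa * sqrt Sb
      + real k / real n powr (3/2) * sqrt (Sa + 1 / real n * Ta) * sqrt (Sb + 1 / real n * Tb)"
    unfolding distrib_right mult.assoc
    using assms by (intro add_left_mono mult_left_mono mult_mono real_sqrt_le_mono) auto
  finally show ?thesis .
qed

theorem lemmaC1:
  fixes M :: "'s measure" and d :: nat and X :: "int \<Rightarrow> nat \<Rightarrow> 's \<Rightarrow> real"
    and a b n k :: nat
  assumes "prob_space M"
    and "weakly_stationary M d X"
    and "\<And>t j. j \<in> {1..d} \<Longrightarrow> integral\<^sup>L M (X t j) = 0"
    and "a \<in> {1..d}" and "b \<in> {1..d}"
    and "(\<lambda>u. \<bar>real_of_int u\<bar> * \<bar>acov M X a a u\<bar>) summable_on UNIV"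
    and "(\<lambda>u. \<bar>real_of_int u\<bar> * \<bar>acov M X b b u\<bar>) summable_on UNIV"
    and "k < n"
  shows "wasserstein
      (distr M borel (\<lambda>\<omega>. sqrt (real n) * (acov_tilde X n a b k \<omega> - acov M X a b (int k))))
      (distr M borel (\<lambda>\<omega>. sqrt (real n) * (acov_hat X n a b k \<omega> - acov M X a b (int k))))
    \<le> ereal (
        1 / sqrt (real n) * sqrt (\<Sum>\<^sub>\<infinity>u. \<bar>acov M X a a u\<bar>) * sqrt (\<Sum>\<^sub>\<infinity>u. \<bar>acov M X b b u\<bar>)
      + real k / real n powr (3/2)
        * sqrt ((\<Sum>\<^sub>\<infinity>u. \<bar>acov M X a a u\<bar>) + 1 / real n * (\<Sum>\<^sub>\<infinity>u. \<bar>real_of_int u\<bar> * \<bar>acov M X a a u\<bar>))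
        * sqrt ((\<Sum>\<^sub>\<infinity>u. \<bar>acov M X b b u\<bar>) + 1 / real n * (\<Sum>\<^sub>\<infinity>u. \<bar>real_of_int u\<bar> * \<bar>acov M X b b u\<bar>)))"
proof -
  interpret prob_space M by (rule assms(1))
  note ws = assms(2) and a = assms(4) and b = assms(5) and kn = assms(8)
  define U where "U = (\<lambda>\<omega>. sqrt (real n) * (acov_tilde X n a b k \<omega> - acov M X a b (int k)))"
  define V where "V = (\<lambda>\<omega>. sqrt (real n) * (acov_hat X n a b k \<omega> - acov M X a b (int k)))"
  define Sa where "Sa = (\<Sum>\<^sub>\<infinity>u. \<bar>acov M X a a u\<bar>)"
  define Sb where "Sb = (\<Sum>\<^sub>\<infinity>u. \<bar>acov M X b b u\<bar>)"
  define Ta where "Ta = (\<Sum>\<^sub>\<infinity>u. \<bar>real_of_int u\<bar> * \<bar>acov M X a a u\<bar>)"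
  define Tb where "Tb = (\<Sum>\<^sub>\<infinity>u. \<bar>real_of_int u\<bar> * \<bar>acov M X b b u\<bar>)"
  have "integrable M U" "integrable M V"
    unfolding U_def V_def using integrable_acov_tilde[OF ws a b] integrable_acov_hat[OF ws a b] by auto
  then have W: "wasserstein (distr M borel U) (distr M borel V) \<le> ereal (\<integral>\<omega>. \<bar>U \<omega> - V \<omega>\<bar> \<partial>M)"
    by (rule wasserstein_distr_le_integral_abs_diff[OF finite_measure_axioms])
  have "(\<integral>\<omega>. \<bar>U \<omega> - V \<omega>\<bar> \<partial>M) = sqrt (real n) * (\<integral>\<omega>. \<bar>acov_tilde X n a b k \<omega> - acov_hat X n a b k \<omega>\<bar> \<partial>M)"
    by (simp add: U_def V_def abs_mult flip: right_diff_distrib)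
  also have "\<dots> \<le> sqrt (real n) * ((1 + real k / real (n + k)) / real n * sqrt Sa * sqrt Sb)"
    unfolding Sa_def Sb_def
    using abs_summable_on_of_first_moment[OF assms(6)] abs_summable_on_of_first_moment[OF assms(7)]
    by (intro mult_left_mono integral_abs_acov_tilde_minus_acov_hat_le[OF ws a b _ _ kn]) auto
  also have "\<dots> \<le> 1 / sqrt (real n) * sqrt Sa * sqrt Sb
      + real k / real n powr (3/2) * sqrt (Sa + 1 / real n * Ta) * sqrt (Sb + 1 / real n * Tb)"
    unfolding Sa_def Sb_def Ta_def Tb_def
    by (rule rescaled_difference_bound_le[OF kn]) (simp_all add: infsum_nonneg)
  finally show ?thesis
    using W unfolding U_def V_def Sa_def Sb_def Ta_def Tb_def by (simp add: order_trans)
qed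

end
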